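(* Let $U$ be a subgroup of $G^*$, let $(p_j)_{j=1}^R\in\mathcal{P}^R$ be a system of representatives of the $U$-orbits of $\mathcal{P}$ (i.e. the sets $p_j^U=\{p_j^\varphi:\varphi\in U\}$, $j=1,\dots,R$, are exactly the distinct orbits $\{p^\varphi:\varphi\in U\}$, $p\in\mathcal{P}$), and let $(\mu_j)_{j=1}^R$ be matchings with $\mu_j\in C^U(p_j)$ for every $j$. Then there exists a unique resolute and $U$-symmetric matching mechanism $H$ such that $H(p_j)=\{\mu_j\}$ for every $j\in\{1,\dots,R\}$.
   Context: Fix $n\ge 2$, $W=\{1,\dots,n\}$, $M=\{n+1,\dots,2n\}$, $I=W\cup M$. Permutations compose right-to-left. A preference profile is a function $p$ on $I$ assigning to each $x\in W$ a linear order $p(x)$ on $M$ and to each $y\in M$ a linear order $p(y)$ on $W$; $\mathcal{P}$ is the set of preference profiles. A matching is a permutation $\mu$ of $I$ with $\mu(W)=M$, $\mu(M)=W$, $\mu(\mu(z))=z$; $\mathcal{M}$ is the set of matchings. $G^*=\{\varphi\in\mathrm{Sym}(I):\{\varphi(W),\varphi(M)\}=\{W,M\}\}$. For a linear order $R$ on $X\subseteq I$ and $\varphi\in\mathrm{Sym}(I)$, $\varphi R$ is the relation on $\varphi(X)$ with $(a,b)\in\varphi R$ iff $(\varphi^{-1}(a),\varphi^{-1}(b))\in R$. For $\varphi\in G^*$, $p^\varphi(z)=\varphi\,p(\varphi^{-1}(z))$ (this defines a group action of $G^*$ on $\mathcal{P}$); $\mu^\varphi=\varphi\mu\varphi^{-1}$;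 $S^\varphi=\{\mu^\varphi:\mu\in S\}$. A matching mechanism is a correspondence $F$ from $\mathcal{P}$ to $\mathcal{M}$; resolute if $|F(p)|=1$ for all $p$; $U$-symmetric if $F(p^\varphi)=F(p)^\varphi$ for all $p$, $\varphi\in U$. $\mathrm{Stab}_U(p)=\{\varphi\in U:p^\varphi=p\}$ and $C^U(p)=\{\mu\in\mathcal{M}:\mu^\varphi=\mu\text{ for all }\varphi\in\mathrm{Stab}_U(p)\}$. *)

theory Defs
  imports "HOL-Combinatorics.Permutations"
begin

type_synonym profile = "nat \<Rightarrow> (nat \<times> nat) set"
type_synonym matching = "nat \<Rightarrow> nat"

definition Wset :: "nat \<Rightarrow> nat set" where "Wset n = {1..n}"
definition Mset :: "nat \<Rightarrow> nat set" where "Mset n = {n+1..2*n}"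
definition Iset :: "nat \<Rightarrow> nat set" where "Iset n = Wset n \<union> Mset n"

text \<open>Preference profiles. Linear orders are reflexive linear orders (linear_order_on).
  Outside the agent set I the profile is fixed to the empty relation (functions in HOL are total).\<close>
definition profiles :: "nat \<Rightarrow> profile set" where
  "profiles n = {p. (\<forall>x\<in>Wset n. linear_order_on (Mset n) (p x))
                  \<and> (\<forall>y\<in>Mset n. linear_order_on (Wset n) (p y))
                  \<and> (\<forall>z. z \<notin> Iset n \<longrightarrow> p z = {})}"

definition matchings :: "nat \<Rightarrow> matching set" where
  "matchings n = {\<mu>. \<mu> permutes Iset n \<and> \<mu> ` Wset n = Mset n \<and> \<mu> ` Mset n = Wset n
                    \<and> (\<forall>z\<in>Iset n. \<mu> (\<mu> z) = z)}"

definition Gstar :: "nat \<Rightarrow> (nat \<Rightarrow> nat) set" where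
  "Gstar n = {\<phi>. \<phi> permutes Iset n \<and> {\<phi> ` Wset n, \<phi> ` Mset n} = {Wset n, Mset n}}"

definition is_subgroup_Gstar :: "nat \<Rightarrow> (nat \<Rightarrow> nat) set \<Rightarrow> bool" where
  "is_subgroup_Gstar n U \<longleftrightarrow> U \<subseteq> Gstar n \<and> id \<in> U
     \<and> (\<forall>\<phi>\<in>U. \<forall>\<psi>\<in>U. \<phi> \<circ> \<psi> \<in> U) \<and> (\<forall>\<phi>\<in>U. inv \<phi> \<in> U)"

definition act_rel :: "(nat \<Rightarrow> nat) \<Rightarrow> (nat \<times> nat) set \<Rightarrow> (nat \<times> nat) set" where
  "act_rel \<phi> R = {(a, b). (inv \<phi> a, inv \<phi> b) \<in> R}"

definition act_prof :: "(nat \<Rightarrow> nat) \<Rightarrow> profile \<Rightarrow> profile" where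
  "act_prof \<phi> p = (\<lambda>z. act_rel \<phi> (p (inv \<phi> z)))"

definition act_match :: "(nat \<Rightarrow> nat) \<Rightarrow> matching \<Rightarrow> matching" where
  "act_match \<phi> \<mu> = \<phi> \<circ> \<mu> \<circ> inv \<phi>"

definition orbit_U :: "(nat \<Rightarrow> nat) set \<Rightarrow> profile \<Rightarrow> profile set" where
  "orbit_U U p = {act_prof \<phi> p | \<phi>. \<phi> \<in> U}"

definition Stab :: "(nat \<Rightarrow> nat) set \<Rightarrow> profile \<Rightarrow> (nat \<Rightarrow> nat) set" where
  "Stab U p = {\<phi> \<in> U. act_prof \<phi> p = p}"

definition CU :: "nat \<Rightarrow> (nat \<Rightarrow> nat) set \<Rightarrow> profile \<Rightarrow> matching set" where
  "CU n U p = {\<mu> \<in> matchings n. \<forall>\<phi>\<in>Stab U p. act_match \<phi> \<mu> = \<mu>}"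

text \<open>A matching mechanism: a correspondence from profiles to matchings; it is the
  empty set outside the set of profiles (extensional representation of a map on P).\<close>
definition mechanism :: "nat \<Rightarrow> (profile \<Rightarrow> matching set) \<Rightarrow> bool" where
  "mechanism n F \<longleftrightarrow> (\<forall>p\<in>profiles n. F p \<subseteq> matchings n) \<and> (\<forall>p. p \<notin> profiles n \<longrightarrow> F p = {})"

definition resolute :: "nat \<Rightarrow> (profile \<Rightarrow> matching set) \<Rightarrow> bool" where
  "resolute n F \<longleftrightarrow> (\<forall>p\<in>profiles n. card (F p) = 1)"

definition U_symmetric :: "nat \<Rightarrow> (nat \<Rightarrow> nat) set \<Rightarrow> (profile \<Rightarrow> matching set) \<Rightarrow> bool" where
  "U_symmetric n U F \<longleftrightarrow>
     (\<forall>p\<in>profiles n. \<forall>\<phi>\<in>U. F (act_prof \<phi> p) = act_match \<phi> ` F p)"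

end

theory Submission
  imports Defs
begin

(* Every profile is p_j^phi for exactly one j and some phi in U, and one puts H(p_j^phi) = {mu_j^phi}.
   This does not depend on phi: two choices phi, psi differ by inv psi o phi, an element of the
   stabiliser of p_j, which fixes mu_j because mu_j lies in C^U(p_j). Symmetry of H is then built in;
   conversely, symmetry forces H(p_j^phi) = H(p_j)^phi, which gives uniqueness. *)

lemma act_rel_eq_dir_image:
  assumes "bij f"
  shows "act_rel f r = dir_image r f"
  using assms unfolding act_rel_def dir_image_def
  by (auto simp: bij_is_inj) (metis bij_inv_eq_iff assms)

lemma linear_order_on_act_rel:
  assumes "bij f" and "linear_order_on A r"
  shows "linear_order_on (f ` A) (act_rel f r)"
proof -
  have "Field r = A"
    using assms(2) unfolding order_on_defs refl_on_def Field_def by blast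
  moreover have "inj_on f A"
    using assms(1) bij_is_inj inj_on_subset by blast
  ultimately show ?thesis
    using Linear_order_dir_image[of r f] dir_image_Field[of r f] assms(2)
    by (simp add: act_rel_eq_dir_image[OF assms(1)])
qed

lemma inv_in_iff_in_image: "bij f \<Longrightarrow> inv f x \<in> A \<longleftrightarrow> x \<in> f ` A"
  by (metis bij_inv_eq_iff image_iff)

lemma act_prof_id [simp]: "act_prof id p = p"
  unfolding act_prof_def act_rel_def by simp

lemma act_match_id [simp]: "act_match id \<mu> = \<mu>"
  unfolding act_match_def by simp

lemma act_prof_comp: "bij \<phi> \<Longrightarrow> bij \<psi> \<Longrightarrow> act_prof (\<phi> \<circ> \<psi>) p = act_prof \<phi> (act_prof \<psi> p)"
  unfolding act_prof_def act_rel_def by (simp add: o_inv_distrib)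

lemma act_match_comp:
  "bij \<phi> \<Longrightarrow> bij \<psi> \<Longrightarrow> act_match (\<phi> \<circ> \<psi>) \<mu> = act_match \<phi> (act_match \<psi> \<mu>)"
  unfolding act_match_def by (simp add: o_inv_distrib o_assoc)

lemma act_prof_inv_act_prof: "bij \<phi> \<Longrightarrow> act_prof (inv \<phi>) (act_prof \<phi> p) = p"
  by (simp add: act_prof_comp[symmetric] bij_imp_bij_inv bij_is_inj)

lemma Gstar_bij: "\<phi> \<in> Gstar n \<Longrightarrow> bij \<phi>"
  unfolding Gstar_def using permutes_bij by blast

lemma Gstar_cases:
  assumes "\<phi> \<in> Gstar n"
  obtains "\<phi> ` Wset n = Wset n" "\<phi> ` Mset n = Mset n"
        | "\<phi> ` Wset n = Mset n" "\<phi> ` Mset n = Wset n"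
  using assms unfolding Gstar_def by (auto simp: doubleton_eq_iff)

lemma act_prof_in_profiles:
  assumes \<phi>: "\<phi> \<in> Gstar n" and p: "p \<in> profiles n"
  shows "act_prof \<phi> p \<in> profiles n"
proof -
  have bij: "bij \<phi>" using \<phi> by (rule Gstar_bij)
  have lin: "linear_order_on (\<phi> ` A) (act_prof \<phi> p x)"
    if "x \<in> \<phi> ` B" and "\<forall>y\<in>B. linear_order_on A (p y)" for x A B
    using that linear_order_on_act_rel[OF bij] inv_in_iff_in_image[OF bij]
    unfolding act_prof_def by blast
  have W: "\<forall>y\<in>Wset n. linear_order_on (Mset n) (p y)"
    and M: "\<forall>y\<in>Mset n. linear_order_on (Wset n) (p y)"
    using p unfolding profiles_def by blast+
  have "act_prof \<phi> p z = {}" if "z \<notin> Iset n" for z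
  proof -
    have "inv \<phi> z = z"
      using permutes_inv[of \<phi> "Iset n"] \<phi> that unfolding Gstar_def by (simp add: permutes_not_in)
    then show ?thesis
      using p that unfolding act_prof_def act_rel_def profiles_def by auto
  qed
  moreover from \<phi> have "(\<forall>x\<in>Wset n. linear_order_on (Mset n) (act_prof \<phi> p x))
      \<and> (\<forall>x\<in>Mset n. linear_order_on (Wset n) (act_prof \<phi> p x))"
    using lin[of _ "Wset n" "Mset n"] lin[of _ "Mset n" "Wset n"] W M
    by (cases rule: Gstar_cases) auto
  ultimately show ?thesis
    unfolding profiles_def by blast
qed

lemma act_match_in_matchings:
  assumes \<phi>: "\<phi> \<in> Gstar n" and \<mu>: "\<mu> \<in> matchings n"
  shows "act_match \<phi> \<mu> \<in> matchings n"
proof -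
  have bij: "bij \<phi>" using \<phi> by (rule Gstar_bij)
  have perm: "\<phi> permutes Iset n" using \<phi> unfolding Gstar_def by blast
  have \<mu>_perm: "\<mu> permutes Iset n"
    and \<mu>_invol: "\<forall>z\<in>Iset n. \<mu> (\<mu> z) = z"
    and \<mu>_W: "\<mu> ` Wset n = Mset n" and \<mu>_M: "\<mu> ` Mset n = Wset n"
    using \<mu> unfolding matchings_def by blast+
  have "act_match \<phi> \<mu> permutes Iset n"
    unfolding act_match_def
    by (intro permutes_compose[OF permutes_inv[OF perm]] permutes_compose[OF \<mu>_perm perm])
  moreover have "act_match \<phi> \<mu> (act_match \<phi> \<mu> z) = z" if "z \<in> Iset n" for z
  proof -
    have "inv \<phi> z \<in> Iset n"
      using that by (simp add: permutes_in_image[OF permutes_inv[OF perm]])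
    then show ?thesis
      using \<mu>_invol unfolding act_match_def
      by (simp add: inv_f_f[OF bij_is_inj[OF bij]] surj_f_inv_f[OF bij_is_surj[OF bij]])
  qed
  moreover have "act_match \<phi> \<mu> ` Wset n = Mset n \<and> act_match \<phi> \<mu> ` Mset n = Wset n"
  proof -
    have image: "act_match \<phi> \<mu> ` A = \<phi> ` \<mu> ` inv \<phi> ` A" for A
      unfolding act_match_def by (simp add: image_comp)
    have inv_image: "inv \<phi> ` (\<phi> ` A) = A" for A
      using image_inv_f_f[OF bij_is_inj[OF bij]] .
    from \<phi> show ?thesis
      unfolding image using inv_image[of "Wset n"] inv_image[of "Mset n"] \<mu>_W \<mu>_M
      by (cases rule: Gstar_cases) simp_all
  qed
  ultimately show ?thesis
    using \<mu>_W \<mu>_M unfolding matchings_def by blast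
qed

lemma subgroup_Gstar_bij: "is_subgroup_Gstar n U \<Longrightarrow> \<phi> \<in> U \<Longrightarrow> bij \<phi>"
  unfolding is_subgroup_Gstar_def using Gstar_bij by blast

lemma in_orbit_U_self:
  assumes "is_subgroup_Gstar n U"
  shows "q \<in> orbit_U U q"
proof -
  have "id \<in> U" "q = act_prof id q"
    using assms unfolding is_subgroup_Gstar_def by simp_all
  then show ?thesis
    unfolding orbit_U_def by blast
qed

lemma orbit_U_act_prof:
  assumes U: "is_subgroup_Gstar n U" and \<phi>: "\<phi> \<in> U"
  shows "orbit_U U (act_prof \<phi> q) = orbit_U U q"
proof -
  have closed: "\<chi> \<circ> \<psi> \<in> U" "inv \<psi> \<in> U" if "\<chi> \<in> U" "\<psi> \<in> U" for \<chi> \<psi>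
    using U that unfolding is_subgroup_Gstar_def by blast+
  have bij: "bij \<chi>" if "\<chi> \<in> U" for \<chi>
    using subgroup_Gstar_bij[OF U that] .
  have "act_prof \<chi> (act_prof \<phi> q) \<in> orbit_U U q" if "\<chi> \<in> U" for \<chi>
  proof -
    have "act_prof \<chi> (act_prof \<phi> q) = act_prof (\<chi> \<circ> \<phi>) q"
      using that \<phi> bij by (simp add: act_prof_comp)
    then show ?thesis
      using that \<phi> closed unfolding orbit_U_def by blast
  qed
  moreover have "act_prof \<chi> q \<in> orbit_U U (act_prof \<phi> q)" if "\<chi> \<in> U" for \<chi>
  proof -
    have "act_prof \<chi> q = act_prof (\<chi> \<circ> inv \<phi>) (act_prof \<phi> q)"
      using that \<phi> closed bij by (simp add: act_prof_comp act_prof_inv_act_prof)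
    then show ?thesis
      using that \<phi> closed unfolding orbit_U_def by blast
  qed
  ultimately show ?thesis
    unfolding orbit_U_def by blast
qed

lemma act_match_eq_if_act_prof_eq:
  assumes U: "is_subgroup_Gstar n U" and \<phi>: "\<phi> \<in> U" and \<psi>: "\<psi> \<in> U"
    and \<mu>: "\<mu> \<in> CU n U p" and eq: "act_prof \<phi> p = act_prof \<psi> p"
  shows "act_match \<phi> \<mu> = act_match \<psi> \<mu>"
proof -
  define \<chi> where "\<chi> = inv \<psi> \<circ> \<phi>"
  have bij: "bij \<phi>" "bij \<psi>" "bij (inv \<psi>)"
    using subgroup_Gstar_bij[OF U] \<phi> \<psi> bij_imp_bij_inv by blast+
  have "\<chi> \<in> U"
    using U \<phi> \<psi> unfolding \<chi>_def is_subgroup_Gstar_def by blast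
  moreover have "act_prof \<chi> p = p"
    using eq bij unfolding \<chi>_def by (simp add: act_prof_comp act_prof_inv_act_prof)
  ultimately have "act_match \<chi> \<mu> = \<mu>"
    using \<mu> unfolding CU_def Stab_def by blast
  moreover have "\<psi> \<circ> \<chi> = \<phi>"
    using bij unfolding \<chi>_def by (simp add: o_assoc surj_iff[THEN iffD1, OF bij_is_surj])
  ultimately show ?thesis
    using bij act_match_comp[of \<psi> \<chi>] unfolding \<chi>_def by (metis bij_comp)
qed

lemma U_symmetric_mechanisms_eqI:
  assumes "mechanism n H" "mechanism n H'" "U_symmetric n U H" "U_symmetric n U H'"
    and reps: "\<And>p. p \<in> profiles n \<Longrightarrow> \<exists>q\<in>Q. \<exists>\<phi>\<in>U. p = act_prof \<phi> q"
    and "Q \<subseteq> profiles n" and agree: "\<And>q. q \<in> Q \<Longrightarrow> H q = H' q"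
  shows "H = H'"
proof
  fix p
  show "H p = H' p"
  proof (cases "p \<in> profiles n")
    case True
    then obtain q \<phi> where q: "q \<in> Q" and \<phi>: "\<phi> \<in> U" and p: "p = act_prof \<phi> q"
      using reps by blast
    have "q \<in> profiles n" using q assms(6) by blast
    then have "H p = act_match \<phi> ` H q" "H' p = act_match \<phi> ` H' q"
      using assms(3,4) \<phi> unfolding p U_symmetric_def by blast+
    then show ?thesis
      using agree[OF q] by simp
  next
    case False
    then show ?thesis
      using assms(1,2) unfolding mechanism_def by simp
  qed
qed

locale orbit_representatives =
  fixes n R :: nat and U :: "(nat \<Rightarrow> nat) set"
    and ps :: "nat \<Rightarrow> profile" and \<mu>s :: "nat \<Rightarrow> matching"
  assumes subgroup: "is_subgroup_Gstar n U"
    and reps_profiles: "\<forall>j\<in>{1..R}. ps j \<in> profiles n"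
    and reps_inj: "inj_on (\<lambda>j. orbit_U U (ps j)) {1..R}"
    and reps_cover: "(\<lambda>j. orbit_U U (ps j)) ` {1..R} = orbit_U U ` profiles n"
    and reps_targets: "\<forall>j\<in>{1..R}. \<mu>s j \<in> CU n U (ps j)"
begin

lemma subgroup_in_Gstar: "\<phi> \<in> U \<Longrightarrow> \<phi> \<in> Gstar n"
  using subgroup unfolding is_subgroup_Gstar_def by blast

lemma profile_in_orbit_of_rep:
  assumes "p \<in> profiles n"
  obtains j \<phi> where "j \<in> {1..R}" "\<phi> \<in> U" "p = act_prof \<phi> (ps j)"
proof -
  have "orbit_U U p \<in> (\<lambda>j. orbit_U U (ps j)) ` {1..R}"
    using assms unfolding reps_cover by (rule imageI)
  then obtain j where j: "j \<in> {1..R}" "orbit_U U p = orbit_U U (ps j)"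
    by auto
  then have "p \<in> orbit_U U (ps j)"
    using in_orbit_U_self[OF subgroup, of p] by simp
  then show ?thesis
    using j(1) that unfolding orbit_U_def by blast
qed

lemma rep_index_unique:
  assumes "j \<in> {1..R}" "j' \<in> {1..R}" "\<phi> \<in> U" "\<psi> \<in> U"
    and "act_prof \<phi> (ps j) = act_prof \<psi> (ps j')"
  shows "j = j'"
proof -
  have "orbit_U U (ps j) = orbit_U U (act_prof \<phi> (ps j))"
    using orbit_U_act_prof[OF subgroup assms(3)] by simp
  also have "\<dots> = orbit_U U (ps j')"
    using orbit_U_act_prof[OF subgroup assms(4)] assms(5) by simp
  finally show ?thesis
    using reps_inj assms(1,2) unfolding inj_on_def by blast
qed

definition extension :: "profile \<Rightarrow> matching set" where
  "extension p = (if p \<in> profiles n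
     then {act_match \<phi> (\<mu>s j) | j \<phi>. j \<in> {1..R} \<and> \<phi> \<in> U \<and> act_prof \<phi> (ps j) = p}
     else {})"

lemma extension_act_prof_rep:
  assumes j: "j \<in> {1..R}" and \<phi>: "\<phi> \<in> U"
  shows "extension (act_prof \<phi> (ps j)) = {act_match \<phi> (\<mu>s j)}"
proof -
  have "act_prof \<phi> (ps j) \<in> profiles n"
    using act_prof_in_profiles[OF subgroup_in_Gstar[OF \<phi>]] reps_profiles j by blast
  moreover have "act_match \<psi> (\<mu>s j') = act_match \<phi> (\<mu>s j)"
    if j': "j' \<in> {1..R}" and \<psi>: "\<psi> \<in> U" and eq: "act_prof \<psi> (ps j') = act_prof \<phi> (ps j)" for j' \<psi>
  proof -
    have "j' = j" using rep_index_unique[OF j' j \<psi> \<phi> eq] .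
    moreover have "\<mu>s j \<in> CU n U (ps j)" using reps_targets j by blast
    ultimately show ?thesis
      using act_match_eq_if_act_prof_eq[OF subgroup \<psi> \<phi>] eq by simp
  qed
  then have "{act_match \<psi> (\<mu>s j') | j' \<psi>. j' \<in> {1..R} \<and> \<psi> \<in> U \<and> act_prof \<psi> (ps j') = act_prof \<phi> (ps j)}
      = {act_match \<phi> (\<mu>s j)}"
    using j \<phi> by blast
  ultimately show ?thesis
    unfolding extension_def by simp
qed

lemma mechanism_extension: "mechanism n extension"
  unfolding mechanism_def
proof (intro conjI ballI allI impI)
  fix p
  assume "p \<in> profiles n"
  then obtain j \<phi> where j: "j \<in> {1..R}" and \<phi>: "\<phi> \<in> U" and p: "p = act_prof \<phi> (ps j)"
    by (rule profile_in_orbit_of_rep)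
  have "\<mu>s j \<in> matchings n"
    using reps_targets j unfolding CU_def by blast
  then show "extension p \<subseteq> matchings n"
    using act_match_in_matchings[OF subgroup_in_Gstar[OF \<phi>]] extension_act_prof_rep[OF j \<phi>] p by simp
qed (simp add: extension_def)

lemma resolute_extension: "resolute n extension"
  unfolding resolute_def
proof
  fix p
  assume "p \<in> profiles n"
  then obtain j \<phi> where "j \<in> {1..R}" "\<phi> \<in> U" "p = act_prof \<phi> (ps j)"
    by (rule profile_in_orbit_of_rep)
  then show "card (extension p) = 1"
    by (simp add: extension_act_prof_rep)
qed

lemma U_symmetric_extension: "U_symmetric n U extension"
  unfolding U_symmetric_def
proof (intro ballI)
  fix p \<psi>
  assume p: "p \<in> profiles n" and \<psi>: "\<psi> \<in> U"
  from p obtain j \<phi> where j: "j \<in> {1..R}" and \<phi>: "\<phi> \<in> U" and p: "p = act_prof \<phi> (ps j)"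
    by (rule profile_in_orbit_of_rep)
  have bij: "bij \<psi>" "bij \<phi>"
    using subgroup_Gstar_bij[OF subgroup] \<phi> \<psi> by blast+
  have \<psi>\<phi>: "\<psi> \<circ> \<phi> \<in> U"
    using subgroup \<phi> \<psi> unfolding is_subgroup_Gstar_def by blast
  have "extension (act_prof \<psi> p) = {act_match (\<psi> \<circ> \<phi>) (\<mu>s j)}"
    using extension_act_prof_rep[OF j \<psi>\<phi>] act_prof_comp[OF bij] unfolding p by simp
  also have "\<dots> = act_match \<psi> ` extension p"
    using extension_act_prof_rep[OF j \<phi>] bij unfolding p by (simp add: act_match_comp)
  finally show "extension (act_prof \<psi> p) = act_match \<psi> ` extension p" .
qed

lemma extension_rep: "j \<in> {1..R} \<Longrightarrow> extension (ps j) = {\<mu>s j}"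
  using extension_act_prof_rep[of j id] subgroup unfolding is_subgroup_Gstar_def by simp

lemma extension_unique:
  assumes "mechanism n H" "U_symmetric n U H" "\<forall>j\<in>{1..R}. H (ps j) = {\<mu>s j}"
  shows "H = extension"
proof (rule U_symmetric_mechanisms_eqI[where Q = "ps ` {1..R}"])
  show "\<exists>q\<in>ps ` {1..R}. \<exists>\<phi>\<in>U. p = act_prof \<phi> q" if "p \<in> profiles n" for p
    using that by (rule profile_in_orbit_of_rep) blast
  show "ps ` {1..R} \<subseteq> profiles n"
    using reps_profiles by blast
  show "H q = extension q" if "q \<in> ps ` {1..R}" for q
    using that assms(3) extension_rep by auto
qed (use assms mechanism_extension U_symmetric_extension in simp_all)

end

theorem theorem10:
  fixes n R :: nat and U :: "(nat \<Rightarrow> nat) set"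
    and ps :: "nat \<Rightarrow> profile" and \<mu>s :: "nat \<Rightarrow> matching"
  assumes "n \<ge> 2"
    and "is_subgroup_Gstar n U"
    and "\<forall>j\<in>{1..R}. ps j \<in> profiles n"
    and "inj_on (\<lambda>j. orbit_U U (ps j)) {1..R}"
    and "(\<lambda>j. orbit_U U (ps j)) ` {1..R} = orbit_U U ` profiles n"
    and "\<forall>j\<in>{1..R}. \<mu>s j \<in> CU n U (ps j)"
  shows "\<exists>!H. mechanism n H \<and> resolute n H \<and> U_symmetric n U H
              \<and> (\<forall>j\<in>{1..R}. H (ps j) = {\<mu>s j})"
proof -
  interpret orbit_representatives n R U ps \<mu>s
    using assms(2-6) by unfold_locales
  show ?thesis
  proof (rule ex1I[of _ extension])
    show "mechanism n extension \<and> resolute n extension \<and> U_symmetric n U extension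
        \<and> (\<forall>j\<in>{1..R}. extension (ps j) = {\<mu>s j})"
      using mechanism_extension resolute_extension U_symmetric_extension extension_rep by blast
  qed (use extension_unique in blast)
qed

end
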